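(* Let $X := (0,\infty)$ and let $g : X \to X$ be continuous and strictly increasing with $g(x) < x$ for all $x>0$. Then the following statements are equivalent. (i) The functions $g$ and $\mathrm{id}-g$ (i.e. $x \mapsto x - g(x)$) admit a common Abel function. (ii) The functions $g$ and $\mathrm{id}-g$ commute, i.e. $g(x - g(x)) = g(x) - g(g(x))$ for all $x>0$. (iii) For all $x>0$, $g(x) = g(x - g(x)) + g(g(x))$.
   Context: An Abel function of a map $\phi : X \to X$ is a homeomorphism $\alpha : X \to \mathbb{R}$ for which there is a constant $c$ with $\alpha(\phi(x)) = \alpha(x) + c$ for all $x > 0$. A common Abel function of $g$ and $\mathrm{id}-g$ is a single such $\alpha$ that is an Abel function of both (with possibly different constants). *)

theory Defs
  imports "HOL-Analysis.Analysis"
begin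

definition abel_function :: "(real \<Rightarrow> real) \<Rightarrow> (real \<Rightarrow> real) \<Rightarrow> bool" where
  "abel_function \<alpha> \<phi> \<longleftrightarrow>
     (\<exists>\<beta>. homeomorphism {0<..} (UNIV :: real set) \<alpha> \<beta>) \<and>
     (\<exists>c. \<forall>x>0. \<alpha> (\<phi> x) = \<alpha> x + c)"

definition common_abel_function :: "(real \<Rightarrow> real) \<Rightarrow> (real \<Rightarrow> real) \<Rightarrow> bool" where
  "common_abel_function \<phi> \<psi> \<longleftrightarrow> (\<exists>\<alpha>. abel_function \<alpha> \<phi> \<and> abel_function \<alpha> \<psi>)"

end

theory Submission
  imports Defs
begin

text \<open>Write \<open>G = g\<close> and \<open>H = id - g\<close>. A common Abel function forces \<open>G\<close> and \<open>H\<close> to commute,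
  and (ii) and (iii) are the same equation. Conversely, if \<open>G\<close> and \<open>H\<close> commute, then
  \<open>y = \<Sum>\<^sub>c (n choose c) G\<^sup>c H\<^sup>n\<^sup>-\<^sup>c y\<close>, and the nonnegative variance of the count \<open>c\<close> under these
  weights yields \<open>G(y)\<^sup>2 \<le> y G(G y)\<close>. So the ratio \<open>r y = G y / y\<close> increases along \<open>G\<close>-orbits and
  decreases along \<open>H\<close>-orbits. Strict monotonicity and continuity of \<open>G\<close> make the limit of \<open>r\<close>
  along \<open>G\<close>-orbits a constant \<open>A\<close>. If the limit \<open>M\<close> along some \<open>H\<close>-orbit were below \<open>A\<close>,
  choose \<open>p, q\<close> with \<open>M\<^sup>p < (1 - M)\<^sup>q\<close> and \<open>(1 - A)\<^sup>q < A\<^sup>p\<close>: far along the \<open>H\<close>-orbit \<open>G\<^sup>p z < H\<^sup>q z\<close>,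
  far along the \<open>G\<close>-orbit of that \<open>z\<close> the order is reversed, which contradicts commutativity and
  monotonicity of \<open>G\<^sup>j\<close>. Hence \<open>r = A\<close>, i.e. \<open>g x = A x\<close>, and \<open>ln\<close> is a common Abel function.\<close>

lemma geometric_lower_bound:
  fixes R :: "nat \<Rightarrow> real"
  assumes c: "c \<ge> 0" and step: "\<And>j. j \<ge> N \<Longrightarrow> c * R j \<le> R (Suc j)"
  shows "R N * c ^ k \<le> R (N + k)"
proof (induction k)
  case 0 then show ?case by simp
next
  case (Suc k)
  have "R N * c ^ Suc k \<le> c * R (N + k)"
    using mult_left_mono[OF Suc.IH c] by (simp add: algebra_simps)
  also have "\<dots> \<le> R (N + Suc k)" using step[of "N + k"] by simp
  finally show ?case .
qed

lemma exists_powers_separating: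
  fixes M A :: real
  assumes M: "0 \<le> M" and MA: "M < A" and A: "A \<le> 1"
  shows "\<exists>p q :: nat. M ^ p < (1 - M) ^ q \<and> (1 - A) ^ q < A ^ p"
proof -
  consider "A = 1" | "M = 0" "A < 1" | "0 < M" "A < 1" using M A by linarith
  then show ?thesis
  proof cases
    case 1
    obtain p where "M ^ p < 1 - M" using real_arch_pow_inv[of "1 - M" M] MA 1 by auto
    then show ?thesis using 1 by (intro exI[of _ p] exI[of _ 1]) simp
  next
    case 2
    obtain q where q: "(1 - A) ^ q < A" using real_arch_pow_inv[of A "1 - A"] MA 2 by auto
    then show ?thesis using 2 by (intro exI[of _ 1] exI[of _ q]) simp
  next
    case 3
    have logs: "ln M < ln A" "ln A < 0" "ln (1 - A) < ln (1 - M)" "ln (1 - M) < 0"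
      using 3 MA by auto
    define s t where "s = ln A / ln (1 - A)" and "t = ln M / ln (1 - M)"
    have "ln A * ln (1 - M) < ln M * ln (1 - A)"
      using logs by (smt (verit) mult_strict_mono mult_minus_left mult_minus_right)
    then have "s < t" using logs by (simp add: s_def t_def field_simps)
    then obtain r where "r \<in> \<rat>" "s < r" "r < t" using Rats_dense_in_real by blast
    then obtain a b :: int where b: "b > 0" and r: "r = of_int a / of_int b"
      by (auto elim: Rats_cases')
    have "s > 0" using logs by (simp add: s_def divide_neg_neg)
    then have "real_of_int a / real_of_int b > 0" using \<open>s < r\<close> r by simp
    then have a: "a > 0" using b by (simp add: zero_less_divide_iff)
    have "real_of_int a * ln (1 - A) < real_of_int b * ln A"
      using \<open>s < r\<close> logs b r by (simp add: s_def field_simps)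
    moreover have "real_of_int b * ln M < real_of_int a * ln (1 - M)"
      using \<open>r < t\<close> logs b r by (simp add: t_def field_simps)
    ultimately have "ln ((1 - A) ^ nat a) < ln (A ^ nat b)" "ln (M ^ nat b) < ln ((1 - M) ^ nat a)"
      using a b by (simp_all add: ln_realpow)
    then show ?thesis using 3 MA by (intro exI[of _ "nat b"] exI[of _ "nat a"]) simp
  qed
qed

locale commuting_split =
  fixes G H :: "real \<Rightarrow> real"
  assumes G_pos: "\<And>y. y > 0 \<Longrightarrow> G y > 0"
    and H_pos: "\<And>y. y > 0 \<Longrightarrow> H y > 0"
    and G_plus_H: "\<And>y. y > 0 \<Longrightarrow> G y + H y = y"
    and G_H_commute: "\<And>y. y > 0 \<Longrightarrow> G (H y) = H (G y)"
begin

lemma G_less: "y > 0 \<Longrightarrow> G y < y"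
  using G_plus_H[of y] H_pos[of y] by linarith

lemma G_H_plus_G_G: "y > 0 \<Longrightarrow> G (H y) + G (G y) = G y"
  using G_H_commute[of y] G_plus_H[of "G y"] G_pos[of y] by simp

text \<open>\<open>word_sum n f y\<close> is the sum of \<open>f c * w y\<close> over all words \<open>w\<close> of length \<open>n\<close> in \<open>G\<close> and \<open>H\<close>,
  where \<open>c\<close> is the number of letters \<open>G\<close> in \<open>w\<close>.\<close>

primrec word_sum :: "nat \<Rightarrow> (nat \<Rightarrow> real) \<Rightarrow> real \<Rightarrow> real" where
  "word_sum 0 f y = f 0 * y"
| "word_sum (Suc n) f y = word_sum n (\<lambda>c. f (Suc c)) (G y) + word_sum n f (H y)"

lemma word_sum_add: "word_sum n (\<lambda>c. f c + k c) y = word_sum n f y + word_sum n k y"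
  by (induction n arbitrary: f k y) (auto simp: algebra_simps)

lemma word_sum_scale: "word_sum n (\<lambda>c. a * f c) y = a * word_sum n f y"
  by (induction n arbitrary: f y) (auto simp: algebra_simps)

lemma word_sum_const: "y > 0 \<Longrightarrow> word_sum n (\<lambda>c. a) y = a * y"
proof (induction n arbitrary: y)
  case 0 then show ?case by simp
next
  case (Suc n)
  then show ?case using G_pos[of y] H_pos[of y] G_plus_H[of y]
    by (simp add: distrib_left[symmetric])
qed

lemma word_sum_nonneg: "y > 0 \<Longrightarrow> (\<And>c. f c \<ge> 0) \<Longrightarrow> word_sum n f y \<ge> 0"
  by (induction n arbitrary: f y) (simp_all add: G_pos H_pos)

lemma word_sum_count: "y > 0 \<Longrightarrow> word_sum n real y = real n * G y"
proof (induction n arbitrary: y)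
  case 0 then show ?case by simp
next
  case (Suc n)
  have "word_sum (Suc n) real y = word_sum n (\<lambda>c. 1 + real c) (G y) + word_sum n real (H y)"
    by simp
  also have "\<dots> = G y + real n * (G (H y) + G (G y))"
    using Suc G_pos[of y] H_pos[of y] by (simp add: word_sum_add word_sum_const algebra_simps)
  also have "\<dots> = real (Suc n) * G y"
    using G_H_plus_G_G[OF Suc.prems] by (simp add: algebra_simps)
  finally show ?case .
qed

lemma word_sum_count_pairs:
  "y > 0 \<Longrightarrow> word_sum n (\<lambda>c. real c * (real c - 1)) y = real n * (real n - 1) * G (G y)"
proof (induction n arbitrary: y)
  case 0 then show ?case by simp
next
  case (Suc n)
  let ?f = "\<lambda>c. real c * (real c - 1)"
  have shift: "(\<lambda>c. ?f (Suc c)) = (\<lambda>c. ?f c + 2 * real c)"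
    by (auto simp: algebra_simps)
  have Gy: "G y > 0" and Hy: "H y > 0" using G_pos H_pos Suc.prems by auto
  have "word_sum (Suc n) ?f y = word_sum n ?f (G y) + 2 * word_sum n real (G y) + word_sum n ?f (H y)"
    by (simp only: word_sum.simps shift word_sum_add word_sum_scale)
  also have "\<dots> = real n * (real n - 1) * (G (G (G y)) + G (G (H y))) + 2 * real n * G (G y)"
    by (simp only: Suc.IH[OF Gy] Suc.IH[OF Hy] word_sum_count[OF Gy]) (simp add: algebra_simps)
  also have "G (G (G y)) + G (G (H y)) = G (G y)"
    using G_H_plus_G_G[OF Gy] G_H_commute[OF Suc.prems] by (simp add: add.commute)
  finally show ?case by (simp add: algebra_simps)
qed

text \<open>The letter count \<open>c\<close> has nonnegative variance; then let \<open>n \<rightarrow> \<infinity>\<close>.\<close>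

lemma G_squared_le: assumes y: "y > 0" shows "(G y)^2 \<le> G (G y) * y"
proof -
  let ?D = "(G y)^2 - G (G y) * y"
  have bound: "real n * ?D \<le> G y * y - G (G y) * y" if n: "n > 0" for n
  proof -
    have expand: "(\<lambda>c. (real c * y - real n * G y)^2) = (\<lambda>c. y^2 * (real c * (real c - 1))
        + ((y^2 - 2 * real n * G y * y) * real c + (real n * G y)^2))"
      by (auto simp: power2_eq_square algebra_simps)
    have "word_sum n (\<lambda>c. (real c * y - real n * G y)^2) y
        = y^2 * word_sum n (\<lambda>c. real c * (real c - 1)) y
          + ((y^2 - 2 * real n * G y * y) * word_sum n real y + word_sum n (\<lambda>c. (real n * G y)^2) y)"
      by (simp only: expand word_sum_add word_sum_scale)
    also have "\<dots> = real n * y * (G y * y - G (G y) * y - real n * ?D)"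
      by (simp only: word_sum_count_pairs[OF y] word_sum_count[OF y] word_sum_const[OF y])
         (simp add: power2_eq_square algebra_simps)
    moreover have "word_sum n (\<lambda>c. (real c * y - real n * G y)^2) y \<ge> 0"
      by (rule word_sum_nonneg[OF y]) simp
    moreover have "real n * y > 0" using n y by simp
    ultimately show ?thesis by (auto simp: zero_le_mult_iff)
  qed
  show ?thesis
  proof (rule ccontr)
    assume "\<not> ?thesis"
    then have D: "?D > 0" by simp
    then obtain n where "G y * y - G (G y) * y < real n * ?D"
      using ex_less_of_nat_mult by blast
    moreover have "real n * ?D \<le> real (Suc n) * ?D" using D by simp
    ultimately show False using bound[of "Suc n"] by simp
  qed
qed

definition ratio :: "real \<Rightarrow> real" where "ratio y = G y / y"

lemma ratio_pos: "y > 0 \<Longrightarrow> 0 < ratio y"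
  using G_pos[of y] by (simp add: ratio_def)

lemma ratio_less_1: "y > 0 \<Longrightarrow> ratio y < 1"
  using G_less[of y] by (simp add: ratio_def)

lemma G_eq_ratio_mult: "y > 0 \<Longrightarrow> G y = ratio y * y"
  by (simp add: ratio_def)

lemma ratio_le_ratio_G: assumes y: "y > 0" shows "ratio y \<le> ratio (G y)"
  using G_squared_le[OF y] y G_pos[OF y] by (simp add: ratio_def field_simps power2_eq_square)

lemma ratio_G:
  assumes v: "v > 0" shows "ratio (G v) = 1 - ratio (H v) * (1 - ratio v) / ratio v"
proof -
  have complement: "1 - ratio v = H v / v" using G_plus_H[OF v] v by (simp add: ratio_def field_simps)
  have "ratio (H v) * (1 - ratio v) / ratio v = G (H v) / G v"
    using v G_pos[OF v] H_pos[OF v] unfolding complement by (simp add: ratio_def field_simps)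
  moreover have "G (G v) = G v - G (H v)" using G_H_plus_G_G[OF v] by simp
  ultimately show ?thesis
    using G_pos[OF v] by (simp add: ratio_def diff_divide_distrib)
qed

lemma funpow_G_pos: "y > 0 \<Longrightarrow> (G ^^ k) y > 0"
  by (induction k) (auto simp: G_pos)

lemma funpow_H_pos: "y > 0 \<Longrightarrow> (H ^^ k) y > 0"
  by (induction k) (auto simp: H_pos)

lemma funpow_G_H_pos: "y > 0 \<Longrightarrow> (G ^^ k) ((H ^^ m) y) > 0"
  by (simp add: funpow_G_pos funpow_H_pos)

lemma G_funpow_H_commute: "y > 0 \<Longrightarrow> G ((H ^^ m) y) = (H ^^ m) (G y)"
  by (induction m) (simp_all add: G_H_commute funpow_H_pos)

lemma funpow_G_funpow_H_commute: "y > 0 \<Longrightarrow> (G ^^ k) ((H ^^ m) y) = (H ^^ m) ((G ^^ k) y)"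
  by (induction k) (simp_all add: G_funpow_H_commute funpow_G_pos)

lemma funpow_G_le: "y > 0 \<Longrightarrow> (G ^^ k) y \<le> y"
proof (induction k)
  case 0 then show ?case by simp
next
  case (Suc k)
  then show ?case using G_less[of "(G ^^ k) y"] funpow_G_pos[of y k] by simp
qed

lemma funpow_G_div_eq_prod: "y > 0 \<Longrightarrow> (G ^^ p) y / y = (\<Prod>i<p. ratio ((G ^^ i) y))"
proof (induction p)
  case 0 then show ?case by simp
next
  case (Suc p)
  have "(G ^^ Suc p) y = ratio ((G ^^ p) y) * (G ^^ p) y"
    using G_eq_ratio_mult[of "(G ^^ p) y"] funpow_G_pos[OF Suc.prems, of p] by simp
  then show ?case using Suc by (simp add: field_simps)
qed

lemma incseq_ratio_funpow_G: "y > 0 \<Longrightarrow> incseq (\<lambda>j. ratio ((G ^^ j) y))"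
  by (rule incseq_SucI) (simp add: ratio_le_ratio_G funpow_G_pos)

definition limit_ratio :: "real \<Rightarrow> real" where
  "limit_ratio x = lim (\<lambda>j. ratio ((G ^^ j) x))"

lemma ratio_funpow_G_tendsto:
  assumes x: "x > 0" shows "(\<lambda>j. ratio ((G ^^ j) x)) \<longlonglongrightarrow> limit_ratio x"
proof -
  obtain L where "(\<lambda>j. ratio ((G ^^ j) x)) \<longlonglongrightarrow> L"
    using incseq_convergent[OF incseq_ratio_funpow_G[OF x], of 1]
      ratio_less_1[OF funpow_G_pos[OF x]] by (metis less_imp_le)
  then show ?thesis unfolding limit_ratio_def by (metis limI)
qed

lemma ratio_funpow_G_le_limit_ratio: "x > 0 \<Longrightarrow> ratio ((G ^^ j) x) \<le> limit_ratio x"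
  by (rule incseq_le[OF incseq_ratio_funpow_G ratio_funpow_G_tendsto])

lemma limit_ratio_le_1: assumes x: "x > 0" shows "limit_ratio x \<le> 1"
  by (rule LIMSEQ_le_const2[OF ratio_funpow_G_tendsto[OF x]])
     (use ratio_less_1[OF funpow_G_pos[OF x]] in \<open>auto intro: less_imp_le\<close>)

lemma limit_ratio_funpow_G:
  assumes x: "x > 0" shows "limit_ratio ((G ^^ k) x) = limit_ratio x"
proof -
  have "(\<lambda>j. ratio ((G ^^ (j + k)) x)) \<longlonglongrightarrow> limit_ratio x"
    using LIMSEQ_ignore_initial_segment[OF ratio_funpow_G_tendsto[OF x]] .
  then have "(\<lambda>j. ratio ((G ^^ j) ((G ^^ k) x))) \<longlonglongrightarrow> limit_ratio x"
    by (simp add: funpow_add)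
  then show ?thesis using ratio_funpow_G_tendsto[OF funpow_G_pos[OF x]] LIMSEQ_unique by blast
qed

lemma tendsto_ratio_funpow_G_along_H_orbit:
  assumes y: "y > 0" and lim: "(\<lambda>m. ratio ((H ^^ m) y)) \<longlonglongrightarrow> M" and M: "M > 0"
  shows "(\<lambda>m. ratio ((G ^^ i) ((H ^^ m) y))) \<longlonglongrightarrow> M"
proof (induction i)
  case 0 then show ?case using lim by simp
next
  case (Suc i)
  define v where "v m = (G ^^ i) ((H ^^ m) y)" for m
  have v: "v m > 0" for m unfolding v_def using funpow_G_H_pos[OF y] .
  have "H (v m) = v (Suc m)" for m
    using funpow_G_funpow_H_commute[OF y, of i m] funpow_G_funpow_H_commute[OF y, of i "Suc m"]
    by (simp add: v_def)
  then have "(\<lambda>m. ratio (H (v m))) \<longlonglongrightarrow> M"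
    using LIMSEQ_Suc[OF Suc[folded v_def]] by simp
  then have "(\<lambda>m. 1 - ratio (H (v m)) * (1 - ratio (v m)) / ratio (v m)) \<longlonglongrightarrow> 1 - M * (1 - M) / M"
    using Suc M unfolding v_def by (intro tendsto_intros) auto
  moreover have "1 - M * (1 - M) / M = M" using M by (simp add: field_simps)
  ultimately have "(\<lambda>m. ratio (G (v m))) \<longlonglongrightarrow> M" using ratio_G[OF v] by simp
  then show ?case unfolding v_def by simp
qed

lemma tendsto_funpow_G_div_along_H_orbit:
  assumes y: "y > 0" and lim: "(\<lambda>m. ratio ((H ^^ m) y)) \<longlonglongrightarrow> M"
  shows "(\<lambda>m. (G ^^ p) ((H ^^ m) y) / (H ^^ m) y) \<longlonglongrightarrow> M ^ p"
proof -
  have "M \<ge> 0"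
    by (rule LIMSEQ_le_const[OF lim]) (use ratio_pos funpow_H_pos[OF y] less_imp_le in blast)
  then consider "M > 0" | "M = 0" "p = 0" | p' where "M = 0" "p = Suc p'"
    by (cases p) (auto simp: le_less)
  then show ?thesis
  proof cases
    case 1
    have "(\<lambda>m. \<Prod>i<p. ratio ((G ^^ i) ((H ^^ m) y))) \<longlonglongrightarrow> (\<Prod>i<p. M)"
      by (rule tendsto_prod) (rule tendsto_ratio_funpow_G_along_H_orbit[OF y lim 1])
    then show ?thesis using funpow_G_div_eq_prod[OF funpow_H_pos[OF y]] by simp
  next
    case 2
    have "(H ^^ m) y \<noteq> 0" for m using funpow_H_pos[OF y, of m] by simp
    then show ?thesis using 2 by simp
  next
    case (3 p')
    have upper: "(G ^^ p) ((H ^^ m) y) / (H ^^ m) y \<le> ratio ((H ^^ m) y)" for m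
    proof -
      have v: "(H ^^ m) y > 0" using funpow_H_pos[OF y] .
      have "(G ^^ p) ((H ^^ m) y) = (G ^^ p') (G ((H ^^ m) y))"
        unfolding 3 by (simp add: funpow_Suc_right del: funpow.simps)
      also have "\<dots> \<le> G ((H ^^ m) y)" by (rule funpow_G_le[OF G_pos[OF v]])
      finally show ?thesis using v by (simp add: ratio_def divide_right_mono)
    qed
    have lower: "0 \<le> (G ^^ p) ((H ^^ m) y) / (H ^^ m) y" for m
      using funpow_G_H_pos[OF y, of p m] funpow_H_pos[OF y, of m] by simp
    have "(\<lambda>m. (G ^^ p) ((H ^^ m) y) / (H ^^ m) y) \<longlonglongrightarrow> 0"
      by (rule tendsto_sandwich[of "\<lambda>_. 0" _ _ "\<lambda>m. ratio ((H ^^ m) y)"])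
         (use lower upper lim 3 in auto)
    then show ?thesis using 3 by simp
  qed
qed

lemma tendsto_funpow_G_div_along_G_orbit:
  assumes y: "y > 0" and lim: "(\<lambda>m. ratio ((G ^^ m) y)) \<longlonglongrightarrow> L"
  shows "(\<lambda>m. (G ^^ p) ((G ^^ m) y) / (G ^^ m) y) \<longlonglongrightarrow> L ^ p"
proof -
  have "(\<lambda>m. \<Prod>i<p. ratio ((G ^^ (m + i)) y)) \<longlonglongrightarrow> (\<Prod>i<p. L)"
    by (rule tendsto_prod) (rule LIMSEQ_ignore_initial_segment[OF lim])
  moreover have "(G ^^ i) ((G ^^ m) y) = (G ^^ (m + i)) y" for i m
    by (simp add: funpow_add add.commute)
  ultimately show ?thesis using funpow_G_div_eq_prod[OF funpow_G_pos[OF y]] by simp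
qed

end

sublocale commuting_split \<subseteq> swapped: commuting_split H G
  by unfold_locales (auto simp: G_pos H_pos G_H_commute add.commute G_plus_H)

context commuting_split
begin

lemma swapped_ratio: "y > 0 \<Longrightarrow> swapped.ratio y = 1 - ratio y"
  using G_plus_H[of y] by (simp add: ratio_def swapped.ratio_def field_simps)

lemma ratio_H_le: "y > 0 \<Longrightarrow> ratio (H y) \<le> ratio y"
  using swapped.ratio_le_ratio_G[of y] swapped_ratio[of y] swapped_ratio[of "H y"] H_pos[of y]
  by simp

lemma tendsto_ratio_funpow_H:
  assumes y: "y > 0"
  obtains M where "(\<lambda>m. ratio ((H ^^ m) y)) \<longlonglongrightarrow> M" "0 \<le> M" "M \<le> ratio y"
proof -
  have "decseq (\<lambda>m. ratio ((H ^^ m) y))"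
    by (rule decseq_SucI) (simp add: ratio_H_le funpow_H_pos[OF y])
  moreover have "0 \<le> ratio ((H ^^ m) y)" for m
    using ratio_pos[OF funpow_H_pos[OF y]] less_imp_le by blast
  ultimately obtain M where "(\<lambda>m. ratio ((H ^^ m) y)) \<longlonglongrightarrow> M" "\<forall>m. M \<le> ratio ((H ^^ m) y)"
    using decseq_convergent by blast
  moreover from this have "0 \<le> M" using \<open>\<And>m. 0 \<le> ratio ((H ^^ m) y)\<close> LIMSEQ_le_const by blast
  ultimately show ?thesis using that[of M] by (metis funpow_0)
qed

lemma funpow_G_less_funpow_H_along_H_orbit:
  assumes y: "y > 0" and lim: "(\<lambda>m. ratio ((H ^^ m) y)) \<longlonglongrightarrow> M"
    and less: "M ^ p < (1 - M) ^ q"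
  obtains m where "(G ^^ p) ((H ^^ m) y) < (H ^^ q) ((H ^^ m) y)"
proof -
  have "(\<lambda>m. 1 - ratio ((H ^^ m) y)) \<longlonglongrightarrow> 1 - M" by (intro tendsto_intros lim)
  then have "(\<lambda>m. swapped.ratio ((H ^^ m) y)) \<longlonglongrightarrow> 1 - M"
    using swapped_ratio[OF funpow_H_pos[OF y]] by simp
  then have "(\<lambda>m. (H ^^ q) ((H ^^ m) y) / (H ^^ m) y) \<longlonglongrightarrow> (1 - M) ^ q"
    by (rule swapped.tendsto_funpow_G_div_along_G_orbit[OF y])
  with tendsto_funpow_G_div_along_H_orbit[OF y lim, of p]
  have "(\<lambda>m. (G ^^ p) ((H ^^ m) y) / (H ^^ m) y - (H ^^ q) ((H ^^ m) y) / (H ^^ m) y)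
      \<longlonglongrightarrow> M ^ p - (1 - M) ^ q"
    by (rule tendsto_diff)
  moreover have "M ^ p - (1 - M) ^ q < 0" using less by simp
  ultimately have "\<forall>\<^sub>F m in sequentially.
      (G ^^ p) ((H ^^ m) y) / (H ^^ m) y - (H ^^ q) ((H ^^ m) y) / (H ^^ m) y < 0"
    by (rule order_tendstoD(2))
  then obtain m where "(G ^^ p) ((H ^^ m) y) / (H ^^ m) y < (H ^^ q) ((H ^^ m) y) / (H ^^ m) y"
    using eventually_happens'[OF sequentially_bot] by auto
  then show thesis using that funpow_H_pos[OF y, of m] by (simp add: divide_less_cancel)
qed

end

locale monotone_commuting_split = commuting_split +
  assumes G_cont: "continuous_on {0<..} G"
    and G_strict_mono: "strict_mono_on {0<..} G"
begin

lemma funpow_G_strict_mono: "0 < x \<Longrightarrow> x < y \<Longrightarrow> (G ^^ j) x < (G ^^ j) y"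
proof (induction j)
  case 0 then show ?case by simp
next
  case (Suc j)
  then show ?case
    using funpow_G_pos[of x j] funpow_G_pos[of y j] G_strict_mono by (simp add: strict_mono_on_def)
qed

lemma funpow_G_tendsto_0: assumes x: "x > 0" shows "(\<lambda>j. (G ^^ j) x) \<longlonglongrightarrow> 0"
proof -
  have "decseq (\<lambda>j. (G ^^ j) x)"
    by (rule decseq_SucI) (simp add: less_imp_le[OF G_less[OF funpow_G_pos[OF x]]])
  moreover have "0 \<le> (G ^^ j) x" for j using funpow_G_pos[OF x] less_imp_le by blast
  ultimately obtain l where l: "(\<lambda>j. (G ^^ j) x) \<longlonglongrightarrow> l" using decseq_convergent by blast
  have "l \<ge> 0" using LIMSEQ_le_const[OF l] \<open>\<And>j. 0 \<le> (G ^^ j) x\<close> by blast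
  have "l = 0"
  proof (rule ccontr)
    assume "l \<noteq> 0"
    with \<open>l \<ge> 0\<close> have l0: "l > 0" by simp
    have "(\<lambda>j. G ((G ^^ j) x)) \<longlonglongrightarrow> G l"
      by (rule continuous_on_tendsto_compose[OF G_cont l]) (use l0 funpow_G_pos[OF x] in auto)
    moreover have "(\<lambda>j. G ((G ^^ j) x)) \<longlonglongrightarrow> l" using LIMSEQ_Suc[OF l] by simp
    ultimately have "G l = l" using LIMSEQ_unique by blast
    then show False using G_less[OF l0] by simp
  qed
  with l show ?thesis by simp
qed

lemma exists_funpow_G_less: assumes x: "x > 0" and z: "z > 0" shows "\<exists>j. (G ^^ j) x < z"
  by (rule eventually_happens'[OF sequentially_bot order_tendstoD(2)[OF funpow_G_tendsto_0[OF x] z]])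

text \<open>If \<open>limit_ratio y < limit_ratio x\<close>, the quotient \<open>G\<^sup>j x / G\<^sup>j y\<close> would eventually grow
  geometrically, although it stays below \<open>1\<close>.\<close>

lemma limit_ratio_mono:
  assumes x: "0 < x" and xy: "x < y" shows "limit_ratio x \<le> limit_ratio y"
proof (rule ccontr)
  assume "\<not> ?thesis"
  then have less: "limit_ratio y < limit_ratio x" by simp
  have y: "y > 0" using x xy by simp
  define lam where "lam = (limit_ratio x + limit_ratio y) / 2"
  define c where "c = lam / limit_ratio y"
  define R where "R j = (G ^^ j) x / (G ^^ j) y" for j
  have Ly: "limit_ratio y > 0" using ratio_funpow_G_le_limit_ratio[OF y, of 0] ratio_pos[OF y] by simp
  have c: "c > 1" using less Ly by (simp add: c_def lam_def field_simps)
  obtain N where N: "\<And>j. j \<ge> N \<Longrightarrow> ratio ((G ^^ j) x) > lam"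
    using order_tendstoD(1)[OF ratio_funpow_G_tendsto[OF x], of lam] less
    unfolding eventually_sequentially lam_def by force
  have R_pos: "R j > 0" for j by (simp add: R_def funpow_G_pos x y)
  have "c * R j \<le> R (Suc j)" if "j \<ge> N" for j
  proof -
    define u v where "u = (G ^^ j) x" and "v = (G ^^ j) y"
    have u: "u > 0" and v: "v > 0" by (simp_all add: u_def v_def funpow_G_pos x y)
    have "c \<le> ratio u / ratio v"
      unfolding c_def
      by (rule frac_le) (use N[OF that] ratio_funpow_G_le_limit_ratio[OF y, of j] ratio_pos[OF u] ratio_pos[OF v]
          in \<open>auto simp: u_def v_def\<close>)
    then have "c * R j \<le> ratio u / ratio v * R j"
      by (rule mult_right_mono) (simp add: R_pos less_imp_le)
    also have "\<dots> = R (Suc j)"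
      using u v by (simp add: R_def u_def[symmetric] v_def[symmetric] G_eq_ratio_mult)
    finally show ?thesis .
  qed
  then have grow: "R N * c ^ k \<le> R (N + k)" for k using c by (intro geometric_lower_bound) auto
  obtain k where "1 / R N < c ^ k" using real_arch_pow[OF c] by blast
  then have "1 < R N * c ^ k" using R_pos[of N] by (simp add: field_simps)
  moreover have "R (N + k) < 1"
    using funpow_G_strict_mono[OF x xy] funpow_G_pos[OF y] by (simp add: R_def)
  ultimately show False using grow[of k] by simp
qed

lemma limit_ratio_eq: assumes x: "x > 0" shows "limit_ratio x = limit_ratio 1"
proof -
  have le: "limit_ratio a \<le> limit_ratio b" if a: "a > 0" and b: "b > 0" for a b
  proof -
    obtain j where "(G ^^ j) a < b" using exists_funpow_G_less[OF a b] by blast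
    then show ?thesis
      using limit_ratio_mono[OF funpow_G_pos[OF \<open>a > 0\<close>]] limit_ratio_funpow_G[OF \<open>a > 0\<close>] by simp
  qed
  show ?thesis using le[OF x zero_less_one] le[OF zero_less_one x] by simp
qed

lemma limit_ratio_le_ratio: assumes x: "x > 0" shows "limit_ratio 1 \<le> ratio x"
proof -
  define A where "A = limit_ratio 1"
  obtain M where limM: "(\<lambda>m. ratio ((H ^^ m) x)) \<longlonglongrightarrow> M" and "0 \<le> M" "M \<le> ratio x"
    using tendsto_ratio_funpow_H[OF x] .
  have "A \<le> M"
  proof (rule ccontr)
    assume "\<not> A \<le> M"
    then obtain p q where pq: "M ^ p < (1 - M) ^ q" "(1 - A) ^ q < A ^ p"
      using exists_powers_separating[of M A] \<open>0 \<le> M\<close> limit_ratio_le_1[of 1] by (auto simp: A_def)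
    obtain m where "(G ^^ p) ((H ^^ m) x) < (H ^^ q) ((H ^^ m) x)"
      using funpow_G_less_funpow_H_along_H_orbit[OF x limM pq(1)] by blast
    then obtain z where z: "z > 0" and Gz_less_Hz: "(G ^^ p) z < (H ^^ q) z"
      using funpow_H_pos[OF x, of m] by blast
    have "(\<lambda>j. 1 - ratio ((G ^^ j) z)) \<longlonglongrightarrow> 1 - A"
      using ratio_funpow_G_tendsto[OF z] limit_ratio_eq[OF z] by (auto simp: A_def intro: tendsto_intros)
    then have "(\<lambda>j. swapped.ratio ((G ^^ j) z)) \<longlonglongrightarrow> 1 - A"
      using swapped_ratio[OF funpow_G_pos[OF z]] by simp
    moreover have "(1 - A) ^ q < (1 - (1 - A)) ^ p" using pq(2) by simp
    ultimately obtain j where "(H ^^ q) ((G ^^ j) z) < (G ^^ p) ((G ^^ j) z)"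
      using swapped.funpow_G_less_funpow_H_along_H_orbit[OF z] by blast
    moreover have "(G ^^ p) ((G ^^ j) z) = (G ^^ j) ((G ^^ p) z)"
      by (metis add.commute comp_apply funpow_add)
    ultimately have "(G ^^ j) ((H ^^ q) z) < (G ^^ j) ((G ^^ p) z)"
      using funpow_G_funpow_H_commute[OF z, of j q] by simp
    moreover have "(G ^^ j) ((G ^^ p) z) < (G ^^ j) ((H ^^ q) z)"
      by (rule funpow_G_strict_mono[OF funpow_G_pos[OF z] Gz_less_Hz])
    ultimately show False by simp
  qed
  with \<open>M \<le> ratio x\<close> show ?thesis by (simp add: A_def)
qed

lemma ratio_eq_const: "x > 0 \<Longrightarrow> ratio x = limit_ratio 1"
  using limit_ratio_le_ratio[of x] ratio_funpow_G_le_limit_ratio[of x 0] limit_ratio_eq[of x] by simp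

end

lemma commuting_with_complement_imp_linear:
  fixes g :: "real \<Rightarrow> real"
  assumes maps: "\<And>x. x > 0 \<Longrightarrow> g x > 0"
    and cont: "continuous_on {0<..} g"
    and incr: "strict_mono_on {0<..} g"
    and below: "\<And>x. x > 0 \<Longrightarrow> g x < x"
    and comm: "\<forall>x>0. g (x - g x) = g x - g (g x)"
  obtains A where "0 < A" "A < 1" "\<And>x. x > 0 \<Longrightarrow> g x = A * x"
proof -
  interpret monotone_commuting_split g "\<lambda>x. x - g x"
    by unfold_locales (use maps below comm cont incr in auto)
  show ?thesis
  proof (rule that)
    show "0 < limit_ratio 1" "limit_ratio 1 < 1"
      using ratio_eq_const[of 1] ratio_pos[of 1] ratio_less_1[of 1] by simp_all
    show "g x = limit_ratio 1 * x" if "x > 0" for x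
      using G_eq_ratio_mult[OF that] ratio_eq_const[OF that] by simp
  qed
qed

lemma homeomorphism_ln: "homeomorphism {0<..} (UNIV :: real set) ln exp"
proof (rule homeomorphismI)
  show "ln ` {0<..} \<subseteq> (UNIV :: real set)" "exp ` (UNIV :: real set) \<subseteq> {0<..}" by auto
  show "continuous_on {0<..} (ln :: real \<Rightarrow> real)" by (intro continuous_intros) auto
qed (auto intro: continuous_intros)

lemma abel_function_ln_linear:
  assumes A: "A > 0" and \<phi>: "\<And>x. x > 0 \<Longrightarrow> \<phi> x = A * x"
  shows "abel_function ln \<phi>"
  unfolding abel_function_def using homeomorphism_ln A \<phi> by (auto intro!: exI[of _ "ln A"] simp: ln_mult)

lemma abel_functions_commute:
  assumes "abel_function \<alpha> \<phi>" "abel_function \<alpha> \<psi>"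
    and \<phi>: "\<And>x. x > 0 \<Longrightarrow> \<phi> x > 0" and \<psi>: "\<And>x. x > 0 \<Longrightarrow> \<psi> x > 0" and x: "x > 0"
  shows "\<phi> (\<psi> x) = \<psi> (\<phi> x)"
proof -
  obtain \<beta> c d where hom: "homeomorphism {0<..} (UNIV :: real set) \<alpha> \<beta>"
    and c: "\<forall>x>0. \<alpha> (\<phi> x) = \<alpha> x + c" and d: "\<forall>x>0. \<alpha> (\<psi> x) = \<alpha> x + d"
    using assms(1,2) unfolding abel_function_def by blast
  have "\<alpha> (\<phi> (\<psi> x)) = \<alpha> (\<psi> (\<phi> x))" using c d \<phi> \<psi> x by simp
  then have "\<beta> (\<alpha> (\<phi> (\<psi> x))) = \<beta> (\<alpha> (\<psi> (\<phi> x)))" by simp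
  then show ?thesis using homeomorphism_apply1[OF hom] \<phi> \<psi> x by simp
qed

theorem mainTheorem7:
  fixes g :: "real \<Rightarrow> real"
  assumes maps: "\<And>x. x > 0 \<Longrightarrow> g x > 0"
    and cont: "continuous_on {0<..} g"
    and incr: "strict_mono_on {0<..} g"
    and below: "\<And>x. x > 0 \<Longrightarrow> g x < x"
  shows "(common_abel_function g (\<lambda>x. x - g x) \<longleftrightarrow>
            (\<forall>x>0. g (x - g x) = g x - g (g x))) \<and>
         ((\<forall>x>0. g (x - g x) = g x - g (g x)) \<longleftrightarrow>
            (\<forall>x>0. g x = g (x - g x) + g (g x)))"
proof -
  have complement_pos: "x > 0 \<Longrightarrow> x - g x > 0" for x using below[of x] by simp
  have "\<forall>x>0. g (x - g x) = g x - g (g x)" if "common_abel_function g (\<lambda>x. x - g x)"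
    using that abel_functions_commute[of _ g "\<lambda>x. x - g x"] maps complement_pos
    unfolding common_abel_function_def by blast
  moreover have "common_abel_function g (\<lambda>x. x - g x)" if comm: "\<forall>x>0. g (x - g x) = g x - g (g x)"
  proof -
    obtain A where A: "0 < A" "A < 1" "\<And>x. x > 0 \<Longrightarrow> g x = A * x"
      using commuting_with_complement_imp_linear[OF maps cont incr below comm] by blast
    have "abel_function ln g" by (rule abel_function_ln_linear[OF A(1,3)])
    moreover have "abel_function ln (\<lambda>x. x - g x)"
      by (rule abel_function_ln_linear[of "1 - A"]) (use A in \<open>auto simp: algebra_simps\<close>)
    ultimately show ?thesis unfolding common_abel_function_def by blast
  qed
  ultimately show ?thesis by auto
qed

end
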